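(* Let $v_0>0$, let $S$ be a finite nonempty index set, let $x_i\in\mathbb R^d$ with $\|x_i\|_2\le1$ for $i\in S$, and let $(y_i)_{i\in S\cup\{0\}}\in\{0,1\}^{S\cup\{0\}}$ with $\sum_i y_i=1$. Define $$\ell(\mathbf w)=-\sum_{i\in S\cup\{0\}}y_i\log p(i\mid\mathbf w),\quad p(i\mid\mathbf w)=\frac{e^{x_i^\top\mathbf w}}{v_0+\sum_{j\in S}e^{x_j^\top\mathbf w}}\ (i\in S),\quad p(0\mid\mathbf w)=\frac{v_0}{v_0+\sum_{j\in S}e^{x_j^\top\mathbf w}}.$$ Then $\ell$ is $3\sqrt2$-self-concordant-like: for all $\mathbf a,\mathbf b\in\mathbb R^d$, the function $\phi(s)=\ell(\mathbf a+s\mathbf b)$ satisfies $|\phi'''(s)|\le 3\sqrt2\,\|\mathbf b\|_2\,\phi''(s)$ for all $s\in\mathbb R$. In particular the constant does not depend on $|S|$. *)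

theory Defs
  imports "HOL-Analysis.Analysis"
begin

text \<open>Labels: None stands for the outside option 0, Some i for i in S.\<close>

definition mnl_prob ::
  "real \<Rightarrow> 'i set \<Rightarrow> ('i \<Rightarrow> 'a::euclidean_space) \<Rightarrow> 'a \<Rightarrow> 'i option \<Rightarrow> real" where
  "mnl_prob v0 S x w k =
     (case k of
        None \<Rightarrow> v0 / (v0 + (\<Sum>j\<in>S. exp (x j \<bullet> w)))
      | Some i \<Rightarrow> exp (x i \<bullet> w) / (v0 + (\<Sum>j\<in>S. exp (x j \<bullet> w))))"

definition mnl_loss ::
  "real \<Rightarrow> 'i set \<Rightarrow> ('i \<Rightarrow> 'a::euclidean_space) \<Rightarrow> ('i option \<Rightarrow> real) \<Rightarrow> 'a \<Rightarrow> real" where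
  "mnl_loss v0 S x y w =
     - (\<Sum>k\<in>insert None (Some ` S). y k * ln (mnl_prob v0 S x w k))"

definition self_concordant_like :: "real \<Rightarrow> ('a::real_normed_vector \<Rightarrow> real) \<Rightarrow> bool" where
  "self_concordant_like M f \<longleftrightarrow>
     (\<forall>a b s. \<bar>(deriv ^^ 3) (\<lambda>t. f (a + t *\<^sub>R b)) s\<bar>
                \<le> M * norm b * (deriv ^^ 2) (\<lambda>t. f (a + t *\<^sub>R b)) s)"

end

theory Submission
  imports Defs
begin

text \<open>
  Along a line \<open>w = a + t b\<close> the loss equals \<open>ln Z(t)\<close> plus an affine function of \<open>t\<close>,
  where \<open>Z(t) = \<Sum>\<^sub>k exp (c\<^sub>k + t d\<^sub>k)\<close> runs over the options, the outside option
  contributing \<open>c = ln v0\<close>, \<open>d = 0\<close>. The second and third derivatives of \<open>ln Z\<close> are the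
  variance and the third central moment of \<open>d\<close> under the Gibbs weights \<open>exp (c\<^sub>k + t d\<^sub>k)\<close>.
  Since \<open>\<bar>d\<^sub>k\<bar> \<le> \<parallel>b\<parallel>\<close>, every deviation from the mean is at most \<open>2\<parallel>b\<parallel>\<close>, so the third
  central moment is bounded by \<open>2\<parallel>b\<parallel>\<close> times the variance; and \<open>2 \<le> 3\<surd>2\<close>.
\<close>

definition exp_moment :: "'k set \<Rightarrow> ('k \<Rightarrow> real) \<Rightarrow> ('k \<Rightarrow> real) \<Rightarrow> nat \<Rightarrow> real \<Rightarrow> real" where
  "exp_moment K c d m t = (\<Sum>k\<in>K. d k ^ m * exp (c k + t * d k))"

lemma exp_moment_has_real_derivative:
  "(exp_moment K c d m has_real_derivative exp_moment K c d (Suc m) t) (at t)"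
  unfolding exp_moment_def[abs_def]
  by (auto intro!: derivative_eq_intros sum.cong simp: algebra_simps)

lemma exp_moment_0_pos:
  assumes "finite K" "K \<noteq> {}"
  shows "exp_moment K c d 0 t > 0"
  unfolding exp_moment_def using assms by (simp add: sum_pos)

lemma higher_deriv_ln_exp_moment:
  fixes K :: "'k set" and c d :: "'k \<Rightarrow> real"
  assumes "finite K" "K \<noteq> {}"
  defines "Z \<equiv> exp_moment K c d"
  shows "(deriv ^^ 2) (\<lambda>t. ln (Z 0 t) + \<alpha> + \<beta> * t)
           = (\<lambda>t. (Z 2 t * Z 0 t - Z 1 t ^ 2) / Z 0 t ^ 2)"
    and "(deriv ^^ 3) (\<lambda>t. ln (Z 0 t) + \<alpha> + \<beta> * t)
           = (\<lambda>t. (Z 3 t * Z 0 t ^ 2 - 3 * Z 0 t * Z 1 t * Z 2 t + 2 * Z 1 t ^ 3) / Z 0 t ^ 3)"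
proof -
  have pos: "Z 0 t > 0" for t
    unfolding Z_def using exp_moment_0_pos[OF assms(1,2)] .
  have D: "(Z m has_real_derivative Z (Suc m) t) (at t)" for m t
    unfolding Z_def by (rule exp_moment_has_real_derivative)
  have D0: "(Z 0 has_real_derivative Z 1 t) (at t)" for t
    using D[of 0] by simp
  have D1: "(Z 1 has_real_derivative Z 2 t) (at t)" for t
    using D[of 1] by (simp add: numeral_2_eq_2)
  have D2: "(Z 2 has_real_derivative Z 3 t) (at t)" for t
    using D[of 2] by (simp add: numeral_3_eq_3 numeral_2_eq_2)
  have d1: "deriv (\<lambda>t. ln (Z 0 t) + \<alpha> + \<beta> * t) = (\<lambda>t. Z 1 t / Z 0 t + \<beta>)"
  proof
    fix t
    show "deriv (\<lambda>t. ln (Z 0 t) + \<alpha> + \<beta> * t) t = Z 1 t / Z 0 t + \<beta>"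
      using pos[of t] D0[of t]
      by (intro DERIV_imp_deriv) (auto intro!: derivative_eq_intros simp: field_simps)
  qed
  have d2: "deriv (\<lambda>t. Z 1 t / Z 0 t + \<beta>) = (\<lambda>t. (Z 2 t * Z 0 t - Z 1 t ^ 2) / Z 0 t ^ 2)"
  proof
    fix t
    show "deriv (\<lambda>t. Z 1 t / Z 0 t + \<beta>) t = (Z 2 t * Z 0 t - Z 1 t ^ 2) / Z 0 t ^ 2"
      using pos[of t] D0[of t] D1[of t]
      by (intro DERIV_imp_deriv) (auto intro!: derivative_eq_intros simp: field_simps power2_eq_square)
  qed
  have d3: "deriv (\<lambda>t. (Z 2 t * Z 0 t - Z 1 t ^ 2) / Z 0 t ^ 2)
      = (\<lambda>t. (Z 3 t * Z 0 t ^ 2 - 3 * Z 0 t * Z 1 t * Z 2 t + 2 * Z 1 t ^ 3) / Z 0 t ^ 3)"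
  proof
    fix t
    show "deriv (\<lambda>t. (Z 2 t * Z 0 t - Z 1 t ^ 2) / Z 0 t ^ 2) t
        = (Z 3 t * Z 0 t ^ 2 - 3 * Z 0 t * Z 1 t * Z 2 t + 2 * Z 1 t ^ 3) / Z 0 t ^ 3"
      using pos[of t] D0[of t] D1[of t] D2[of t]
      by (intro DERIV_imp_deriv) (auto intro!: derivative_eq_intros simp: field_simps power2_eq_square power3_eq_cube)
  qed
  have funpow2: "(deriv ^^ 2) g = deriv (deriv g)"
    and funpow3: "(deriv ^^ 3) g = deriv (deriv (deriv g))" for g :: "real \<Rightarrow> real"
    by (simp_all add: numeral_2_eq_2 numeral_3_eq_3)
  show "(deriv ^^ 2) (\<lambda>t. ln (Z 0 t) + \<alpha> + \<beta> * t) = (\<lambda>t. (Z 2 t * Z 0 t - Z 1 t ^ 2) / Z 0 t ^ 2)"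
    unfolding funpow2 d1 d2 ..
  show "(deriv ^^ 3) (\<lambda>t. ln (Z 0 t) + \<alpha> + \<beta> * t)
      = (\<lambda>t. (Z 3 t * Z 0 t ^ 2 - 3 * Z 0 t * Z 1 t * Z 2 t + 2 * Z 1 t ^ 3) / Z 0 t ^ 3)"
    unfolding funpow3 d1 d2 d3 ..
qed

lemma sum_centered_square:
  fixes w d :: "'k \<Rightarrow> 'a::comm_ring_1"
  shows "(\<Sum>k\<in>K. w k * (d k - \<mu>) ^ 2)
     = (\<Sum>k\<in>K. w k * d k ^ 2) - 2 * \<mu> * (\<Sum>k\<in>K. w k * d k) + \<mu> ^ 2 * sum w K"
proof -
  have "(\<Sum>k\<in>K. w k * (d k - \<mu>) ^ 2)
      = (\<Sum>k\<in>K. w k * d k ^ 2 - 2 * \<mu> * (w k * d k) + \<mu> ^ 2 * w k)"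
    by (rule sum.cong) (simp_all add: power2_eq_square algebra_simps)
  then show ?thesis by (simp add: sum.distrib sum_subtractf sum_distrib_left)
qed

lemma sum_centered_cube:
  fixes w d :: "'k \<Rightarrow> 'a::comm_ring_1"
  shows "(\<Sum>k\<in>K. w k * (d k - \<mu>) ^ 3)
     = (\<Sum>k\<in>K. w k * d k ^ 3) - 3 * \<mu> * (\<Sum>k\<in>K. w k * d k ^ 2)
       + 3 * \<mu> ^ 2 * (\<Sum>k\<in>K. w k * d k) - \<mu> ^ 3 * sum w K"
proof -
  have "(\<Sum>k\<in>K. w k * (d k - \<mu>) ^ 3)
      = (\<Sum>k\<in>K. w k * d k ^ 3 - 3 * \<mu> * (w k * d k ^ 2) + 3 * \<mu> ^ 2 * (w k * d k) - \<mu> ^ 3 * w k)"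
    by (rule sum.cong) (simp_all add: power2_eq_square power3_eq_cube algebra_simps)
  then show ?thesis by (simp add: sum.distrib sum_subtractf sum_distrib_left)
qed

lemma abs_weighted_sum_le:
  fixes w d :: "'k \<Rightarrow> real"
  assumes "\<And>k. k \<in> K \<Longrightarrow> w k \<ge> 0" and "\<And>k. k \<in> K \<Longrightarrow> \<bar>d k\<bar> \<le> B"
  shows "\<bar>\<Sum>k\<in>K. w k * d k\<bar> \<le> sum w K * B"
proof -
  have "\<bar>\<Sum>k\<in>K. w k * d k\<bar> \<le> (\<Sum>k\<in>K. w k * B)"
  proof (rule order_trans[OF sum_abs sum_mono])
    fix k assume "k \<in> K"
    then show "\<bar>w k * d k\<bar> \<le> w k * B"
      using assms by (simp add: abs_mult mult_left_mono)
  qed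
  then show ?thesis by (simp add: sum_distrib_right)
qed

lemma abs_sum_centered_cube_le:
  fixes w d :: "'k \<Rightarrow> real"
  assumes "\<And>k. k \<in> K \<Longrightarrow> w k \<ge> 0" and "\<And>k. k \<in> K \<Longrightarrow> \<bar>d k - \<mu>\<bar> \<le> D"
  shows "\<bar>\<Sum>k\<in>K. w k * (d k - \<mu>) ^ 3\<bar> \<le> D * (\<Sum>k\<in>K. w k * (d k - \<mu>) ^ 2)"
proof -
  have "\<bar>w k * (d k - \<mu>) ^ 3\<bar> \<le> D * (w k * (d k - \<mu>) ^ 2)" if "k \<in> K" for k
  proof -
    have "\<bar>w k * (d k - \<mu>) ^ 3\<bar> = \<bar>d k - \<mu>\<bar> * (w k * (d k - \<mu>) ^ 2)"
      using assms(1)[OF that] by (simp add: abs_mult power3_eq_cube power2_eq_square)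
    also have "\<dots> \<le> D * (w k * (d k - \<mu>) ^ 2)"
      using assms[OF that] by (intro mult_right_mono) auto
    finally show ?thesis .
  qed
  then have "\<bar>\<Sum>k\<in>K. w k * (d k - \<mu>) ^ 3\<bar> \<le> (\<Sum>k\<in>K. D * (w k * (d k - \<mu>) ^ 2))"
    by (intro order_trans[OF sum_abs sum_mono])
  then show ?thesis by (simp add: sum_distrib_left)
qed

lemma ln_exp_moment_third_deriv_le:
  fixes K :: "'k set" and c d :: "'k \<Rightarrow> real" and \<alpha> \<beta> :: real
  assumes "finite K" "K \<noteq> {}" and d_bound: "\<And>k. k \<in> K \<Longrightarrow> \<bar>d k\<bar> \<le> B"
  defines "\<phi> \<equiv> \<lambda>t. ln (exp_moment K c d 0 t) + \<alpha> + \<beta> * t"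
  shows "\<bar>(deriv ^^ 3) \<phi> t\<bar> \<le> 2 * B * (deriv ^^ 2) \<phi> t"
proof -
  define w where "w k = exp (c k + t * d k)" for k
  define Z where "Z m = exp_moment K c d m t" for m
  have Z_eq: "Z m = (\<Sum>k\<in>K. w k * d k ^ m)" for m
    unfolding Z_def w_def exp_moment_def by (simp add: mult.commute)
  have w_nonneg: "w k \<ge> 0" for k
    unfolding w_def by simp
  have W: "sum w K = Z 0"
    by (simp add: Z_eq)
  have Z0_pos: "Z 0 > 0"
    unfolding Z_def using exp_moment_0_pos[OF assms(1,2)] .
  define \<mu> where "\<mu> = Z 1 / Z 0"
  have Z1: "(\<Sum>k\<in>K. w k * d k) = Z 1" and Z2: "(\<Sum>k\<in>K. w k * d k ^ 2) = Z 2"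
    and Z3: "(\<Sum>k\<in>K. w k * d k ^ 3) = Z 3"
    by (simp_all add: Z_eq)
  have second: "(deriv ^^ 2) \<phi> t = (\<Sum>k\<in>K. w k * (d k - \<mu>) ^ 2) / Z 0"
    unfolding \<phi>_def higher_deriv_ln_exp_moment(1)[OF assms(1,2)] sum_centered_square W Z1 Z2
    using Z0_pos by (simp add: Z_def \<mu>_def field_simps power2_eq_square)
  have third: "(deriv ^^ 3) \<phi> t = (\<Sum>k\<in>K. w k * (d k - \<mu>) ^ 3) / Z 0"
    unfolding \<phi>_def higher_deriv_ln_exp_moment(2)[OF assms(1,2)] sum_centered_cube W Z1 Z2 Z3
    using Z0_pos by (simp add: Z_def \<mu>_def field_simps power2_eq_square power3_eq_cube)
  have "\<bar>Z 1\<bar> \<le> Z 0 * B"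
    using abs_weighted_sum_le[of K w d B] w_nonneg d_bound by (simp add: Z1 W)
  then have "\<bar>\<mu>\<bar> \<le> B"
    using Z0_pos by (simp add: \<mu>_def abs_div divide_le_eq mult.commute)
  then have "\<bar>d k - \<mu>\<bar> \<le> 2 * B" if "k \<in> K" for k
    using d_bound[OF that] by linarith
  then have "\<bar>\<Sum>k\<in>K. w k * (d k - \<mu>) ^ 3\<bar> \<le> 2 * B * (\<Sum>k\<in>K. w k * (d k - \<mu>) ^ 2)"
    using w_nonneg by (intro abs_sum_centered_cube_le)
  then show ?thesis
    unfolding second third using Z0_pos by (simp add: abs_div divide_right_mono)
qed

lemma mnl_loss_along_line:
  fixes v0 :: real and S :: "'i set" and x :: "'i \<Rightarrow> 'a::euclidean_space"
    and y :: "'i option \<Rightarrow> real" and a b :: 'a and t :: real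
  assumes v0: "v0 > 0" and "finite S"
    and y_sum: "(\<Sum>k\<in>insert None (Some ` S). y k) = 1"
  defines "K \<equiv> insert None (Some ` S)"
    and "c \<equiv> case_option (ln v0) (\<lambda>j. x j \<bullet> a)"
    and "d \<equiv> case_option 0 (\<lambda>j. x j \<bullet> b)"
  shows "mnl_loss v0 S x y (a + t *\<^sub>R b)
           = ln (exp_moment K c d 0 t) - (\<Sum>k\<in>K. y k * c k) - (\<Sum>k\<in>K. y k * d k) * t"
proof -
  define Z where "Z = exp_moment K c d 0 t"
  have inner_line: "x j \<bullet> (a + t *\<^sub>R b) = c (Some j) + t * d (Some j)" for j
    unfolding c_def d_def by (simp add: inner_add_right)
  have "Z = exp (c None + t * d None) + (\<Sum>j\<in>S. exp (c (Some j) + t * d (Some j)))"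
    using \<open>finite S\<close> unfolding Z_def exp_moment_def K_def by (simp add: sum.reindex)
  then have "Z = v0 + (\<Sum>j\<in>S. exp (x j \<bullet> (a + t *\<^sub>R b)))"
    using v0 by (simp only: inner_line) (simp add: c_def d_def)
  moreover have "Z > 0"
    unfolding Z_def K_def using \<open>finite S\<close> by (intro exp_moment_0_pos) simp_all
  ultimately have log_prob: "ln (mnl_prob v0 S x (a + t *\<^sub>R b) k) = c k + t * d k - ln Z" for k
    using v0 by (cases k) (simp_all add: mnl_prob_def ln_div inner_line c_def d_def)
  have "mnl_loss v0 S x y (a + t *\<^sub>R b) = - (\<Sum>k\<in>K. y k * (c k + t * d k - ln Z))"
    unfolding mnl_loss_def log_prob K_def ..
  also have "\<dots> = - (\<Sum>k\<in>K. y k * c k + y k * d k * t - y k * ln Z)"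
    by (simp add: algebra_simps)
  also have "\<dots> = (\<Sum>k\<in>K. y k) * ln Z - (\<Sum>k\<in>K. y k * c k) - (\<Sum>k\<in>K. y k * d k) * t"
    by (simp add: sum.distrib sum_subtractf sum_distrib_right)
  finally show ?thesis
    using y_sum unfolding K_def Z_def by simp
qed

lemma self_concordant_like_mono:
  assumes "0 < M" "M \<le> M'" and "self_concordant_like M f"
  shows "self_concordant_like M' f"
  unfolding self_concordant_like_def
proof (intro allI)
  fix a b s
  let ?\<phi> = "\<lambda>t. f (a + t *\<^sub>R b)"
  have bound: "\<bar>(deriv ^^ 3) ?\<phi> s\<bar> \<le> M * (norm b * (deriv ^^ 2) ?\<phi> s)"
    using assms(3) unfolding self_concordant_like_def by (simp add: mult.assoc)
  then have "0 \<le> M * (norm b * (deriv ^^ 2) ?\<phi> s)"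
    by (rule order_trans[OF abs_ge_zero])
  then have "0 \<le> norm b * (deriv ^^ 2) ?\<phi> s"
    using \<open>0 < M\<close> by (simp add: zero_le_mult_iff)
  then have "M * (norm b * (deriv ^^ 2) ?\<phi> s) \<le> M' * (norm b * (deriv ^^ 2) ?\<phi> s)"
    by (rule mult_right_mono[OF \<open>M \<le> M'\<close>])
  with bound show "\<bar>(deriv ^^ 3) ?\<phi> s\<bar> \<le> M' * norm b * (deriv ^^ 2) ?\<phi> s"
    by (simp add: mult.assoc)
qed

lemma mnl_loss_self_concordant_like:
  fixes v0 :: real and S :: "'i set" and x :: "'i \<Rightarrow> 'a::euclidean_space"
    and y :: "'i option \<Rightarrow> real"
  assumes "v0 > 0" and "finite S" and x_bound: "\<forall>i\<in>S. norm (x i) \<le> 1"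
    and "(\<Sum>k\<in>insert None (Some ` S). y k) = 1"
  shows "self_concordant_like 2 (mnl_loss v0 S x y)"
  unfolding self_concordant_like_def
proof (intro allI)
  fix a b :: 'a and s :: real
  define K where "K = insert None (Some ` S)"
  define c where "c = case_option (ln v0) (\<lambda>j. x j \<bullet> a)"
  define d where "d = case_option 0 (\<lambda>j. x j \<bullet> b)"
  have line: "(\<lambda>t. mnl_loss v0 S x y (a + t *\<^sub>R b))
      = (\<lambda>t. ln (exp_moment K c d 0 t) + - (\<Sum>k\<in>K. y k * c k) + - (\<Sum>k\<in>K. y k * d k) * t)"
    using mnl_loss_along_line[OF assms(1,2,4), of x a _ b]
    unfolding K_def c_def d_def by (simp add: fun_eq_iff)
  have d_bound: "\<bar>d k\<bar> \<le> norm b" if "k \<in> K" for k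
  proof (cases k)
    case (Some j)
    then have "norm (x j) \<le> 1"
      using that x_bound unfolding K_def by auto
    then have "norm (x j) * norm b \<le> norm b"
      using mult_right_mono[of "norm (x j)" 1 "norm b"] by simp
    then show ?thesis
      using Cauchy_Schwarz_ineq2[of "x j" b] unfolding d_def Some by simp
  qed (simp add: d_def)
  show "\<bar>(deriv ^^ 3) (\<lambda>t. mnl_loss v0 S x y (a + t *\<^sub>R b)) s\<bar>
      \<le> 2 * norm b * (deriv ^^ 2) (\<lambda>t. mnl_loss v0 S x y (a + t *\<^sub>R b)) s"
    unfolding line using \<open>finite S\<close> d_bound
    by (intro ln_exp_moment_third_deriv_le) (simp_all add: K_def)
qed

theorem propositionD1:
  fixes v0 :: real and S :: "'i set" and x :: "'i \<Rightarrow> 'a::euclidean_space"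
    and y :: "'i option \<Rightarrow> real"
  assumes "v0 > 0"
    and "finite S" and "S \<noteq> {}"
    and "\<forall>i\<in>S. norm (x i) \<le> 1"
    and "\<forall>k\<in>insert None (Some ` S). y k \<in> {0, 1}"
    and "(\<Sum>k\<in>insert None (Some ` S). y k) = 1"
  shows "self_concordant_like (3 * sqrt 2) (mnl_loss v0 S x y)"
proof (rule self_concordant_like_mono)
  show "self_concordant_like 2 (mnl_loss v0 S x y)"
    using assms(1,2,4,6) by (rule mnl_loss_self_concordant_like)
  have "1 \<le> sqrt (2::real)"
    by simp
  then show "(2::real) \<le> 3 * sqrt 2"
    by linarith
qed simp

end
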